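(* Let $X$ be a real Hilbert space, $f,g:X\to\mathbb{R}\cup\{+\infty\}$ proper $\Phi_{lsc}$-convex functions, $\alpha\in\mathbb{R}$ and $\varepsilon\ge0$. Let $\bar x\in\mathrm{dom}(f)\cap\mathrm{dom}(g)$ with $f(\bar x)\ge\alpha$ and $g(\bar x)\ge\alpha$. If $f$ and $g$ satisfy the zero subgradient condition $ZS(\varepsilon,\bar x)$, i.e. $0\in\mathrm{co}\big(\partial^\varepsilon_{lsc}f(\bar x)\cup\partial^\varepsilon_{lsc}g(\bar x)\big)$, then there exist $\varphi_1\in\mathrm{supp}(f)$ and $\varphi_2\in\mathrm{supp}(g)$ such that $\{x:\varphi_1(x)<\alpha-\varepsilon\}\cap\{x:\varphi_2(x)<\alpha-\varepsilon\}=\emptyset$.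
   Context: $\Phi_{lsc}$ is the class of functions $\varphi(x)=-a\|x\|^2+\langle v,x\rangle+c$ ($a\ge0$, $v\in X^*$, $c\in\mathbb{R}$); $\mathrm{supp}(f)=\{\varphi\in\Phi_{lsc}:\varphi\le f\}$; $f$ is $\Phi_{lsc}$-convex if $f=\sup\mathrm{supp}(f)$ pointwise; proper means $\mathrm{supp}(f)\ne\emptyset$ and $\mathrm{dom}(f)\ne\emptyset$. For $\varepsilon\ge0$, $\partial^\varepsilon_{lsc}f(\bar x)$ is the set of $(a,v)\in\mathbb{R}_+\times X^*$ with $f(x)-f(\bar x)\ge\langle v,x-\bar x\rangle-a\|x\|^2+a\|\bar x\|^2-\varepsilon$ for all $x\in X$; this is a subset of the vector space $\mathbb{R}\times X^*$, $\mathrm{co}$ denotes convex hull there, and $0$ means $(0,0)$. For $x_1\in\mathrm{dom}(f)$, $x_2\in\mathrm{dom}(g)$, $f,g$ satisfy $ZS(\varepsilon,x_1,x_2)$ if $0\in\mathrm{co}(\partial^\varepsilon_{lsc}f(x_1)\cup\partial^\varepsilon_{lsc}g(x_2))$; $ZS(\varepsilon,\bar x)$ means $ZS(\varepsilon,\bar x,\bar x)$. *)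

theory Defs
  imports "HOL-Analysis.Analysis"
begin

text \<open>Real Hilbert space X: a type of class real_inner and complete_space.
  The dual X* is identified with X via the Riesz representation: v applied to x is v \<bullet> x.
  Extended-real-valued functions X \<rightarrow> R \<union> {+\<infinity>} are modelled as 'a \<Rightarrow> ereal never taking -\<infinity>.\<close>

definition Phi_lsc :: "('a::real_inner \<Rightarrow> real) set" where
  "Phi_lsc = {\<phi>. \<exists>a v c. a \<ge> 0 \<and> (\<forall>x. \<phi> x = - a * (norm x)\<^sup>2 + inner v x + c)}"

definition supp :: "('a::real_inner \<Rightarrow> ereal) \<Rightarrow> ('a \<Rightarrow> real) set" where
  "supp f = {\<phi> \<in> Phi_lsc. \<forall>x. ereal (\<phi> x) \<le> f x}"

definition edom :: "('a \<Rightarrow> ereal) \<Rightarrow> 'a set" where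
  "edom f = {x. f x < \<infinity>}"

definition Phi_lsc_convex :: "('a::real_inner \<Rightarrow> ereal) \<Rightarrow> bool" where
  "Phi_lsc_convex f \<longleftrightarrow> (\<forall>x. f x = (SUP \<phi>\<in>supp f. ereal (\<phi> x)))"

definition proper_fun :: "('a::real_inner \<Rightarrow> ereal) \<Rightarrow> bool" where
  "proper_fun f \<longleftrightarrow> supp f \<noteq> {} \<and> edom f \<noteq> {}"

definition eps_subdiff_lsc :: "real \<Rightarrow> ('a::real_inner \<Rightarrow> ereal) \<Rightarrow> 'a \<Rightarrow> (real \<times> 'a) set" where
  "eps_subdiff_lsc \<epsilon> f xb = {(a, v). a \<ge> 0 \<and>
     (\<forall>x. f x - f xb \<ge> ereal (inner v (x - xb) - a * (norm x)\<^sup>2 + a * (norm xb)\<^sup>2 - \<epsilon>))}"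

definition ZS :: "real \<Rightarrow> ('a::real_inner \<Rightarrow> ereal) \<Rightarrow> ('a \<Rightarrow> ereal) \<Rightarrow> 'a \<Rightarrow> 'a \<Rightarrow> bool" where
  "ZS \<epsilon> f g x1 x2 \<longleftrightarrow> (0::real \<times> 'a) \<in> convex hull (eps_subdiff_lsc \<epsilon> f x1 \<union> eps_subdiff_lsc \<epsilon> g x2)"

end

theory Submission
  imports Defs
begin

text \<open>Every \<open>\<epsilon>\<close>-subgradient \<open>p = (a, v)\<close> of \<open>f\<close> at \<open>xb\<close> yields the minorant
  \<open>x \<mapsto> f xb - \<epsilon> + \<langle>v, x - xb\<rangle> - a\<parallel>x\<parallel>\<^sup>2 + a\<parallel>xb\<parallel>\<^sup>2\<close> in \<open>supp f\<close>, which depends linearly on \<open>p\<close>.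
  The \<open>\<epsilon>\<close>-subdifferentials are convex, so the zero subgradient condition gives
  \<open>0 = (1 - u) p + u q\<close> with \<open>p\<close>, \<open>q\<close> subgradients of \<open>f\<close>, \<open>g\<close> (or \<open>0\<close> is a subgradient of one of them).
  The same combination of the two minorants, shifted by \<open>\<epsilon> - f xb\<close> and \<open>\<epsilon> - g xb\<close>, vanishes
  identically, so they cannot both lie below \<open>\<alpha> - \<epsilon>\<close> at the same point.\<close>

lemma convex_hull_Un_convex_cases:
  fixes S T :: "'a::real_vector set"
  assumes "convex S" and "convex T" and "z \<in> convex hull (S \<union> T)"
  obtains "z \<in> S" | "z \<in> T"
  | u s t where "0 \<le> u" "u \<le> 1" "s \<in> S" "t \<in> T" "z = (1 - u) *\<^sub>R s + u *\<^sub>R t"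
proof (cases "S = {} \<or> T = {}")
  case True
  then show ?thesis
    using assms that(1,2) by (auto simp: hull_same)
next
  case False
  define F where "F b = (if b then T else S)" for b
  have "convex hull (\<Union>(F ` UNIV)) =
      {\<Sum>b\<in>UNIV. c b *\<^sub>R s b | c s. (\<forall>b. 0 \<le> c b) \<and> sum c UNIV = 1 \<and> (\<forall>b. s b \<in> F b)}"
    using convex_hull_finite_union[of UNIV F] assms False by (simp add: F_def)
  moreover have "\<Union>(F ` UNIV) = S \<union> T"
    by (auto simp: F_def)
  ultimately obtain c s where c: "\<forall>b. 0 \<le> c b" "c False + c True = 1"
    and s: "\<forall>b. s b \<in> F b" and z: "z = c False *\<^sub>R s False + c True *\<^sub>R s True"
    using assms(3) by (auto simp: UNIV_bool)
  have "c False = 1 - c True" and "0 \<le> c True" and "c True \<le> 1"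
    using c by (auto dest: spec[of _ False] spec[of _ True])
  moreover have "s False \<in> S" and "s True \<in> T"
    using s by (auto simp: F_def dest: spec[of _ False] spec[of _ True])
  ultimately show ?thesis
    using z by (intro that(3)[of "c True" "s False" "s True"]) simp_all
qed

text \<open>The \<open>\<epsilon>\<close>-subgradient inequality for \<open>(a, v)\<close> at \<open>xb\<close> reads
  \<open>\<langle>(a, v), lsc_lift xb x\<rangle> - \<epsilon> \<le> f x - f xb\<close>, which makes its linearity in \<open>(a, v)\<close> visible.\<close>

definition lsc_lift :: "'a::real_inner \<Rightarrow> 'a \<Rightarrow> real \<times> 'a" where
  "lsc_lift xb x = ((norm xb)\<^sup>2 - (norm x)\<^sup>2, x - xb)"

lemma mem_eps_subdiff_lsc_iff:
  "p \<in> eps_subdiff_lsc \<epsilon> f xb \<longleftrightarrow>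
     0 \<le> fst p \<and> (\<forall>x. ereal (inner p (lsc_lift xb x) - \<epsilon>) \<le> f x - f xb)"
  by (cases p) (simp add: eps_subdiff_lsc_def lsc_lift_def inner_prod_def algebra_simps)

lemma convex_ereal_inner_sublevel:
  fixes d :: "'a::real_inner" and c :: ereal
  shows "convex {p. ereal (inner p d - e) \<le> c}"
proof (cases c)
  case (real r)
  then have "{p. ereal (inner p d - e) \<le> c} = {p. inner d p \<le> r + e}"
    by (auto simp: inner_commute)
  then show ?thesis
    by (simp add: convex_halfspace_le)
qed auto

lemma convex_eps_subdiff_lsc: "convex (eps_subdiff_lsc \<epsilon> f xb)"
proof -
  have "eps_subdiff_lsc \<epsilon> f xb = {p. 0 \<le> fst p} \<inter>
      (\<Inter>x. {p. ereal (inner p (lsc_lift xb x) - \<epsilon>) \<le> f x - f xb})"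
    by (auto simp: mem_eps_subdiff_lsc_iff)
  moreover have "convex {p :: real \<times> 'a. 0 \<le> fst p}"
    by (auto simp: convex_def)
  ultimately show ?thesis
    by (simp add: convex_Int convex_INT convex_ereal_inner_sublevel)
qed

lemma eps_subgradient_minorant_in_supp:
  assumes "f xb = ereal r" and "p \<in> eps_subdiff_lsc \<epsilon> f xb"
  shows "(\<lambda>x. r - \<epsilon> + inner p (lsc_lift xb x)) \<in> supp f"
proof -
  have "ereal (r - \<epsilon> + inner p (lsc_lift xb x)) \<le> f x" for x
  proof -
    have "ereal (inner p (lsc_lift xb x) - \<epsilon>) \<le> f x - ereal r"
      using assms by (simp add: mem_eps_subdiff_lsc_iff)
    then show ?thesis
      by (cases "f x") auto
  qed
  moreover have "(\<lambda>x. r - \<epsilon> + inner p (lsc_lift xb x)) \<in> Phi_lsc"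
  proof -
    have "0 \<le> fst p"
      using assms(2) by (simp add: mem_eps_subdiff_lsc_iff)
    then show ?thesis
      unfolding Phi_lsc_def
      by (intro CollectI exI[of _ "fst p"] exI[of _ "snd p"]
          exI[of _ "r - \<epsilon> + fst p * (norm xb)\<^sup>2 - inner (snd p) xb"])
         (simp add: lsc_lift_def inner_prod_def algebra_simps)
  qed
  ultimately show ?thesis
    by (simp add: supp_def)
qed

lemma inner_not_both_neg_if_convex_combination_zero:
  fixes p q y :: "'a::real_inner"
  assumes "(1 - u) *\<^sub>R p + u *\<^sub>R q = 0" and "0 \<le> u" and "u \<le> 1"
  shows "\<not> (inner p y < 0 \<and> inner q y < 0)"
proof
  assume neg: "inner p y < 0 \<and> inner q y < 0"
  have "(1 - u) * inner p y + u * inner q y = 0"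
    using arg_cong[OF assms(1), of "\<lambda>z. inner z y"] by (simp add: inner_add_left)
  moreover have "(1 - u) * inner p y + u * inner q y < 0"
  proof (cases "u = 0")
    case True
    then show ?thesis using neg by simp
  next
    case False
    then have "u * inner q y < 0"
      using neg assms(2) by (simp add: mult_pos_neg)
    moreover have "(1 - u) * inner p y \<le> 0"
      using neg assms(3) by (simp add: mult_nonneg_nonpos)
    ultimately show ?thesis by simp
  qed
  ultimately show False
    by simp
qed

theorem mainTheorem11:
  fixes f g :: "'a::{real_inner, complete_space} \<Rightarrow> ereal"
    and \<alpha> \<epsilon> :: real and xb :: 'a
  assumes f_real: "\<forall>x. f x \<noteq> -\<infinity>" and g_real: "\<forall>x. g x \<noteq> -\<infinity>"
    and f_proper: "proper_fun f" and g_proper: "proper_fun g"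
    and f_conv: "Phi_lsc_convex f" and g_conv: "Phi_lsc_convex g"
    and eps: "\<epsilon> \<ge> 0"
    and xb_dom: "xb \<in> edom f \<inter> edom g"
    and f_ge: "f xb \<ge> ereal \<alpha>" and g_ge: "g xb \<ge> ereal \<alpha>"
    and zs: "ZS \<epsilon> f g xb xb"
  shows "\<exists>\<phi>1 \<in> supp f. \<exists>\<phi>2 \<in> supp g.
           {x. \<phi>1 x < \<alpha> - \<epsilon>} \<inter> {x. \<phi>2 x < \<alpha> - \<epsilon>} = {}"
proof -
  obtain rf rg where rf: "f xb = ereal rf" and rg: "g xb = ereal rg"
    using xb_dom f_real g_real unfolding edom_def by (cases "f xb"; cases "g xb") auto
  have "\<alpha> \<le> rf" and "\<alpha> \<le> rg"
    using f_ge g_ge rf rg by auto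
  define \<phi> where "\<phi> r p = (\<lambda>x. r - \<epsilon> + inner p (lsc_lift xb x))" for r p
  have \<phi>f: "\<phi> rf p \<in> supp f" if "p \<in> eps_subdiff_lsc \<epsilon> f xb" for p
    using eps_subgradient_minorant_in_supp[OF rf that] by (simp add: \<phi>_def)
  have \<phi>g: "\<phi> rg q \<in> supp g" if "q \<in> eps_subdiff_lsc \<epsilon> g xb" for q
    using eps_subgradient_minorant_in_supp[OF rg that] by (simp add: \<phi>_def)
  obtain \<psi>f \<psi>g where "\<psi>f \<in> supp f" and "\<psi>g \<in> supp g"
    using f_proper g_proper unfolding proper_fun_def by auto
  from convex_eps_subdiff_lsc convex_eps_subdiff_lsc zs[unfolded ZS_def]
  show ?thesis
  proof (cases rule: convex_hull_Un_convex_cases)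
    case 1
    have "{x. \<phi> rf 0 x < \<alpha> - \<epsilon>} = {}"
      using \<open>\<alpha> \<le> rf\<close> by (simp add: \<phi>_def)
    then show ?thesis
      using \<phi>f[OF 1] \<open>\<psi>g \<in> supp g\<close> by blast
  next
    case 2
    have "{x. \<phi> rg 0 x < \<alpha> - \<epsilon>} = {}"
      using \<open>\<alpha> \<le> rg\<close> by (simp add: \<phi>_def)
    then show ?thesis
      using \<phi>g[OF 2] \<open>\<psi>f \<in> supp f\<close> by blast
  next
    case (3 u p q)
    have sign: "\<not> (inner p (lsc_lift xb x) < 0 \<and> inner q (lsc_lift xb x) < 0)" for x
      using inner_not_both_neg_if_convex_combination_zero 3 by metis
    have "\<not> (\<phi> rf p x < \<alpha> - \<epsilon> \<and> \<phi> rg q x < \<alpha> - \<epsilon>)" for x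
      using sign[of x] \<open>\<alpha> \<le> rf\<close> \<open>\<alpha> \<le> rg\<close> unfolding \<phi>_def by linarith
    then have "{x. \<phi> rf p x < \<alpha> - \<epsilon>} \<inter> {x. \<phi> rg q x < \<alpha> - \<epsilon>} = {}"
      by blast
    then show ?thesis
      using \<phi>f[OF 3(3)] \<phi>g[OF 3(4)] by blast
  qed
qed

end
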